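(* Let $(f_0, M_0, \Lambda_0, \mathcal{Q}_0)$ be a SIMDG with induced set of distributions $\mathcal{P}_0$, training distribution $P_{\mathrm{tr}}$, function class $\mathcal{F}$, and invariant set $\mathcal{I}_0$ as described in the context, and assume that for all $z\in\mathbb{R}^r$ the point mass $\delta_z$ belongs to $\mathcal{Q}_0$. Define $$\mathcal{H}_1 := \{f\in\mathcal{F} \mid Y - f(X) \text{ is independent of } Z \text{ under } P_{\mathrm{tr}}\}.$$ Then: (1) $\mathcal{I}_0 \subseteq \mathcal{H}_1$. (2) If, in addition, $P \ll P_{\mathrm{tr}}$ for all $P\in\mathcal{P}_0$, then $\mathcal{H}_1 \subseteq \mathcal{I}_0$. (3) Without the absolute continuity assumption in (2), the inclusion $\mathcal{H}_1\subseteq\mathcal{I}_0$ may fail, even when $\mathcal{F}$ satisfies: for all $f,g\in\mathcal{F}$ and all $P\in\mathcal{P}_0$, $f(X)=g(X)$ $P_{\mathrm{tr}}$-a.s. implies $f(X)=g(X)$ $P$-a.s.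
   Context: Fix integers $p,r\ge 1$. A SIMDG (simultaneous equation model for distribution generalization) is a tuple $(f_0, M_0, \Lambda_0, \mathcal{Q}_0)$ where $f_0:\mathbb{R}^p\to\mathbb{R}$ is measurable, $M_0\in\mathbb{R}^{p\times r}$, $\Lambda_0$ is a distribution on $\mathbb{R}^{1+p}$ such that $(U,V)\sim\Lambda_0$ satisfies $\mathrm{E}[(U,V)]=0$ and $\mathrm{E}[\|(U,V)\|_2^2]<\infty$ ($U\in\mathbb{R}$, $V\in\mathbb{R}^p$), and $\mathcal{Q}_0$ is a set of distributions on $\mathbb{R}^r$. For each $Q\in\mathcal{Q}_0$ the model induces a distribution $P$ of $(U,V,X,Y,Z)$ by drawing $((U,V),Z)\sim\Lambda_0\otimes Q$ (so $(U,V)$ is independent of $Z$) and setting $X = M_0 Z + V$, $Y = f_0(X)+U$. $\mathcal{P}_0$ is the set of all distributions so induced by some $Q\in\mathcal{Q}_0$. Standing setting: $\sup_{P\in\mathcal{P}_0}\mathrm{E}_P[f_0(X)]^2<\infty$; $Q_{\mathrm{tr}}\in\mathcal{Q}_0$ satisfies $\mathrm{E}_{Q_{\mathrm{tr}}}[Z]=0$ and $\mathrm{E}_{Q_{\mathrm{tr}}}[ZZ^\top]\succ 0$; $P_{\mathrm{tr}}\in\mathcal{P}_0$ is the distribution induced by $Q_{\mathrm{tr}}$. $\mathcal{F}$ is a class of measurable functions $\mathbb{R}^p\to\mathbb{R}$. For $P\in\mathcal{P}_0$ and $f\in\mathcal{F}$, $P^{Y-f(X)}$ denotes the distribution of $Y-f(X)$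 under $P$. A function $f\in\mathcal{F}$ is invariant if $P_{\mathrm{tr}}^{Y-f(X)} = P^{Y-f(X)}$ for all $P\in\mathcal{P}_0$, and $\mathcal{I}_0$ is the set of invariant functions in $\mathcal{F}$. *)

theory Defs
  imports "HOL-Probability.Probability"
begin

type_synonym ('p,'r) outcome = "real \<times> (real^'p) \<times> (real^'p) \<times> real \<times> (real^'r)"

definition simU :: "('p::finite,'r::finite) outcome \<Rightarrow> real" where
  "simU \<omega> = fst \<omega>"
definition simV :: "('p::finite,'r::finite) outcome \<Rightarrow> real^'p" where
  "simV \<omega> = fst (snd \<omega>)"
definition simX :: "('p::finite,'r::finite) outcome \<Rightarrow> real^'p" where
  "simX \<omega> = fst (snd (snd \<omega>))"
definition simY :: "('p::finite,'r::finite) outcome \<Rightarrow> real" where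
  "simY \<omega> = fst (snd (snd (snd \<omega>)))"
definition simZ :: "('p::finite,'r::finite) outcome \<Rightarrow> real^'r" where
  "simZ \<omega> = snd (snd (snd (snd \<omega>)))"

definition induced ::
  "(real^'p::finite \<Rightarrow> real) \<Rightarrow> real^'r::finite^'p \<Rightarrow> (real \<times> (real^'p)) measure
   \<Rightarrow> (real^'r) measure \<Rightarrow> ('p,'r) outcome measure" where
  "induced f0 M0 \<Lambda>0 Q = distr (\<Lambda>0 \<Otimes>\<^sub>M Q) borel
     (\<lambda>((u,v),z). (u, v, M0 *v z + v, f0 (M0 *v z + v) + u, z))"

definition induced_set ::
  "(real^'p::finite \<Rightarrow> real) \<Rightarrow> real^'r::finite^'p \<Rightarrow> (real \<times> (real^'p)) measure
   \<Rightarrow> (real^'r) measure set \<Rightarrow> ('p,'r) outcome measure set" where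
  "induced_set f0 M0 \<Lambda>0 Q0 = induced f0 M0 \<Lambda>0 ` Q0"

definition resid_distr :: "('p::finite,'r::finite) outcome measure \<Rightarrow> (real^'p \<Rightarrow> real) \<Rightarrow> real measure" where
  "resid_distr P f = distr P borel (\<lambda>\<omega>. simY \<omega> - f (simX \<omega>))"

definition simdg_setting ::
  "(real^'p::finite \<Rightarrow> real) \<Rightarrow> real^'r::finite^'p \<Rightarrow> (real \<times> (real^'p)) measure
   \<Rightarrow> (real^'r) measure set \<Rightarrow> (real^'r) measure \<Rightarrow> (real^'p \<Rightarrow> real) set \<Rightarrow> bool" where
  "simdg_setting f0 M0 \<Lambda>0 Q0 Qtr F \<longleftrightarrow>
     f0 \<in> borel_measurable borel \<and>
     prob_space \<Lambda>0 \<and> sets \<Lambda>0 = sets borel \<and>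
     integrable \<Lambda>0 (\<lambda>w. w) \<and> (\<integral>w. w \<partial>\<Lambda>0) = 0 \<and>
     integrable \<Lambda>0 (\<lambda>w. (norm w)\<^sup>2) \<and>
     (\<forall>Q\<in>Q0. prob_space Q \<and> sets Q = sets borel) \<and>
     (\<exists>C. \<forall>P\<in>induced_set f0 M0 \<Lambda>0 Q0.
          integrable P (\<lambda>\<omega>. (f0 (simX \<omega>))\<^sup>2) \<and> (\<integral>\<omega>. (f0 (simX \<omega>))\<^sup>2 \<partial>P) \<le> C) \<and>
     Qtr \<in> Q0 \<and>
     integrable Qtr (\<lambda>z. z) \<and> (\<integral>z. z \<partial>Qtr) = 0 \<and>
     (\<forall>i j. integrable Qtr (\<lambda>z. z $ i * z $ j)) \<and>
     (\<forall>a::real^'r. a \<noteq> 0 \<longrightarrow>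
        a \<bullet> ((\<chi> i j. \<integral>z. z $ i * z $ j \<partial>Qtr) *v a) > 0) \<and>
     F \<subseteq> borel_measurable borel"

definition invariant_set ::
  "(real^'p::finite \<Rightarrow> real) \<Rightarrow> real^'r::finite^'p \<Rightarrow> (real \<times> (real^'p)) measure
   \<Rightarrow> (real^'r) measure set \<Rightarrow> (real^'r) measure \<Rightarrow> (real^'p \<Rightarrow> real) set \<Rightarrow> (real^'p \<Rightarrow> real) set" where
  "invariant_set f0 M0 \<Lambda>0 Q0 Qtr F =
     {f \<in> F. \<forall>P\<in>induced_set f0 M0 \<Lambda>0 Q0.
        resid_distr (induced f0 M0 \<Lambda>0 Qtr) f = resid_distr P f}"

text \<open>Independence of two Borel random variables with possibly different codomains
  (the right-hand side of the library lemma prob_space.indep_var_eq; the library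
  constant indep_var forces both codomains to have the same type).\<close>
definition indep_rv ::
  "'a measure \<Rightarrow> ('a \<Rightarrow> 'b::topological_space) \<Rightarrow> ('a \<Rightarrow> 'c::topological_space) \<Rightarrow> bool" where
  "indep_rv M X Y \<longleftrightarrow>
     X \<in> measurable M borel \<and> Y \<in> measurable M borel \<and>
     prob_space.indep_set M
       (sigma_sets (space M) {X -` A \<inter> space M | A. A \<in> sets borel})
       (sigma_sets (space M) {Y -` A \<inter> space M | A. A \<in> sets borel})"

definition H1_set ::
  "(real^'p::finite \<Rightarrow> real) \<Rightarrow> real^'r::finite^'p \<Rightarrow> (real \<times> (real^'p)) measure
   \<Rightarrow> (real^'r) measure \<Rightarrow> (real^'p \<Rightarrow> real) set \<Rightarrow> (real^'p \<Rightarrow> real) set" where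
  "H1_set f0 M0 \<Lambda>0 Qtr F =
     {f \<in> F. indep_rv (induced f0 M0 \<Lambda>0 Qtr) (\<lambda>\<omega>. simY \<omega> - f (simX \<omega>)) simZ}"

end

theory Submission
  imports Defs
begin

(* Because (U,V) is independent of Z, conditionally on Z = z the residual Y - f(X) has the law
   h(A, z) = Lambda0 {(u,v). f0 (M0 z + v) + u - f (M0 z + v) \<in> A} (cond_resid_prob), so the model induced by Q gives
   P(Y - f(X) \<in> A, Z \<in> B) = \<integral>_B h(A, z) dQ(z). Hence Y - f(X) is independent of Z under P_tr
   iff every h(A, -) is Q_tr-a.e. constant, while f is invariant iff \<integral> h(A, z) dQ(z) is the
   same for all Q \<in> Q0. With the point masses in Q0, invariance makes h(A, z) constant in z,
   which gives (1); absolute continuity transports the Q_tr-a.e. constancy to every Q, which gives (2).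
   For (3) take U = V = 0, f0 = 0, M0 the all-ones matrix, Q_tr uniform on {\<plusminus>e_i} and
   F = {1_{0}}: under Q_tr the regressor X = M0 Z never vanishes, so the residual is 0 and trivially
   independent of Z, whereas under the point mass at Z = 0 it equals -1. *)

section \<open>Independence of random variables with different codomains\<close>

lemma Int_stable_vimage_sets: "Int_stable {X -` A \<inter> \<Omega> | A. A \<in> sets N}"
proof (safe intro!: Int_stableI)
  fix A B assume "A \<in> sets N" "B \<in> sets N"
  then show "\<exists>C. (X -` A \<inter> \<Omega>) \<inter> (X -` B \<inter> \<Omega>) = X -` C \<inter> \<Omega> \<and> C \<in> sets N"
    by (intro exI[of _ "A \<inter> B"]) auto
qed

lemma (in prob_space) indep_rv_iff_prob_Int:
  fixes X :: "'a \<Rightarrow> 'b::topological_space" and Y :: "'a \<Rightarrow> 'c::topological_space"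
  assumes X: "X \<in> borel_measurable M" and Y: "Y \<in> borel_measurable M"
  shows "indep_rv M X Y \<longleftrightarrow> (\<forall>A\<in>sets borel. \<forall>B\<in>sets borel.
     prob (X -` A \<inter> Y -` B \<inter> space M) = prob (X -` A \<inter> space M) * prob (Y -` B \<inter> space M))"
proof -
  let ?GX = "{X -` A \<inter> space M | A. A \<in> sets borel}"
  let ?GY = "{Y -` B \<inter> space M | B. B \<in> sets borel}"
  have events: "?GX \<subseteq> events" "?GY \<subseteq> events"
    using X Y by (auto intro: measurable_sets)
  have "indep_rv M X Y \<longleftrightarrow> indep_set ?GX ?GY"
  proof
    assume "indep_rv M X Y"
    then show "indep_set ?GX ?GY"
      unfolding indep_rv_def
      by (intro indep_setI[OF events] indep_setD[of "sigma_sets (space M) ?GX" "sigma_sets (space M) ?GY"])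
        auto
  next
    assume "indep_set ?GX ?GY"
    then show "indep_rv M X Y"
      unfolding indep_rv_def using X Y by (simp add: indep_set_sigma_sets Int_stable_vimage_sets)
  qed
  also have "\<dots> \<longleftrightarrow> (\<forall>A\<in>sets borel. \<forall>B\<in>sets borel.
     prob (X -` A \<inter> Y -` B \<inter> space M) = prob (X -` A \<inter> space M) * prob (Y -` B \<inter> space M))"
  proof
    assume "indep_set ?GX ?GY"
    then show "\<forall>A\<in>sets borel. \<forall>B\<in>sets borel.
        prob (X -` A \<inter> Y -` B \<inter> space M) = prob (X -` A \<inter> space M) * prob (Y -` B \<inter> space M)"
    proof (intro ballI)
      fix A :: "'b set" and B :: "'c set" assume "A \<in> sets borel" "B \<in> sets borel"
      moreover have "X -` A \<inter> Y -` B \<inter> space M = (X -` A \<inter> space M) \<inter> (Y -` B \<inter> space M)"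
        by auto
      ultimately show "prob (X -` A \<inter> Y -` B \<inter> space M) = prob (X -` A \<inter> space M) * prob (Y -` B \<inter> space M)"
        using \<open>indep_set ?GX ?GY\<close> by (auto intro: indep_setD)
    qed
  next
    assume "\<forall>A\<in>sets borel. \<forall>B\<in>sets borel.
        prob (X -` A \<inter> Y -` B \<inter> space M) = prob (X -` A \<inter> space M) * prob (Y -` B \<inter> space M)"
    then show "indep_set ?GX ?GY"
      by (intro indep_setI[OF events]) (auto simp: Int_left_commute Int_assoc[symmetric])
  qed
  finally show ?thesis .
qed

section \<open>The residual law in the structural model\<close>

lemma borel_measurable_matrix_vector_mult [measurable]:
  "(\<lambda>z. (M :: real^'n::finite^'m::finite) *v z) \<in> borel_measurable borel"
  by (intro borel_measurable_continuous_onI matrix_vector_mult_linear_continuous_on)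

lemma
  shows borel_measurable_simX [measurable]: "simX \<in> borel_measurable borel"
    and borel_measurable_simY [measurable]: "simY \<in> borel_measurable borel"
    and borel_measurable_simZ [measurable]: "simZ \<in> borel_measurable borel"
  unfolding simX_def simY_def simZ_def by (intro borel_measurable_continuous_onI continuous_intros)+

lemma sets_induced [simp, measurable_cong]: "sets (induced f0 M0 \<Lambda>0 Q) = sets borel"
  and space_induced [simp]: "space (induced f0 M0 \<Lambda>0 Q) = UNIV"
  by (simp_all add: induced_def)

abbreviation resid :: "(real^'p::finite \<Rightarrow> real) \<Rightarrow> ('p,'r::finite) outcome \<Rightarrow> real" where
  "resid f \<equiv> \<lambda>\<omega>. simY \<omega> - f (simX \<omega>)"

lemma borel_measurable_resid [measurable]:
  assumes [measurable]: "f \<in> borel_measurable borel"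
  shows "resid f \<in> borel_measurable borel"
  by measurable

lemma emeasure_resid_distr:
  assumes P: "sets P = sets borel" and f: "f \<in> borel_measurable borel" and A: "A \<in> sets borel"
  shows "emeasure (resid_distr P f) A = emeasure P (resid f -` A \<inter> space P)"
proof -
  have "resid f \<in> borel_measurable P"
    using borel_measurable_resid[OF f] by (simp add: measurable_cong_sets[OF P refl])
  then show ?thesis
    unfolding resid_distr_def using A by (simp add: emeasure_distr)
qed

definition structural_resid ::
  "(real^'p::finite \<Rightarrow> real) \<Rightarrow> real^'r::finite^'p \<Rightarrow> (real^'p \<Rightarrow> real)
   \<Rightarrow> (real \<times> (real^'p)) \<times> (real^'r) \<Rightarrow> real" where
  "structural_resid f0 M0 f = (\<lambda>((u, v), z). f0 (M0 *v z + v) + u - f (M0 *v z + v))"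

definition cond_resid_prob ::
  "(real^'p::finite \<Rightarrow> real) \<Rightarrow> real^'r::finite^'p \<Rightarrow> (real \<times> (real^'p)) measure
   \<Rightarrow> (real^'p \<Rightarrow> real) \<Rightarrow> real set \<Rightarrow> real^'r \<Rightarrow> ennreal" where
  "cond_resid_prob f0 M0 \<Lambda>0 f A z = emeasure \<Lambda>0 {w. structural_resid f0 M0 f (w, z) \<in> A}"

lemma
  fixes M0 :: "real^'r::finite^'p::finite"
  shows borel_measurable_structural_X [measurable]:
      "(\<lambda>w::(real \<times> (real^'p)) \<times> (real^'r). M0 *v snd w + snd (fst w)) \<in> borel_measurable borel"
    and borel_measurable_structural_U [measurable]:
      "(\<lambda>w::(real \<times> (real^'p)) \<times> (real^'r). fst (fst w)) \<in> borel_measurable borel"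
    and borel_measurable_structural_V [measurable]:
      "(\<lambda>w::(real \<times> (real^'p)) \<times> (real^'r). snd (fst w)) \<in> borel_measurable borel"
    and borel_measurable_structural_Z [measurable]:
      "(\<lambda>w::(real \<times> (real^'p)) \<times> (real^'r). snd w) \<in> borel_measurable borel"
  by (intro borel_measurable_continuous_onI continuous_intros
      continuous_on_compose2[OF matrix_vector_mult_linear_continuous_on[of UNIV M0]]; simp)+

lemma borel_measurable_structural_resid [measurable]:
  assumes [measurable]: "f0 \<in> borel_measurable borel" "f \<in> borel_measurable borel"
  shows "structural_resid f0 M0 f \<in> borel_measurable borel"
  unfolding structural_resid_def case_prod_beta by measurable

locale simdg_noise = prob_space \<Lambda>0
  for \<Lambda>0 :: "(real \<times> (real^'p::finite)) measure" +
  fixes f0 :: "real^'p \<Rightarrow> real" and M0 :: "real^'r::finite^'p"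
  assumes sets_noise [measurable_cong]: "sets \<Lambda>0 = sets borel"
    and borel_measurable_f0 [measurable]: "f0 \<in> borel_measurable borel"
begin

lemma space_noise [simp]: "space \<Lambda>0 = UNIV"
  using sets_eq_imp_space_eq[OF sets_noise] by simp

lemma sets_pair_noise:
  assumes "sets Q = sets (borel :: (real^'r) measure)"
  shows "sets (\<Lambda>0 \<Otimes>\<^sub>M Q) = sets borel"
  using sets_pair_measure_cong[OF sets_noise assms] borel_prod by metis

lemma borel_measurable_cond_resid_prob [measurable]:
  assumes [measurable]: "f \<in> borel_measurable borel" and "A \<in> sets borel"
  shows "cond_resid_prob f0 M0 \<Lambda>0 f A \<in> borel_measurable borel"
proof -
  interpret pair_sigma_finite \<Lambda>0 "lborel :: (real^'r) measure" ..
  have "structural_resid f0 M0 f -` A \<in> sets (\<Lambda>0 \<Otimes>\<^sub>M lborel)"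
    using measurable_sets[OF borel_measurable_structural_resid[OF borel_measurable_f0 assms(1)] assms(2)]
    by (simp add: sets_pair_noise)
  from measurable_emeasure_Pair2[OF this] show ?thesis
    by (simp add: cond_resid_prob_def[abs_def] measurable_cong_sets[OF sets_lborel] vimage_def)
qed

lemma measurable_structural_map:
  assumes "sets Q = sets borel"
  shows "(\<lambda>((u, v), z). (u, v, M0 *v z + v, f0 (M0 *v z + v) + u, z))
    \<in> measurable (\<Lambda>0 \<Otimes>\<^sub>M Q) (borel :: ('p,'r) outcome measure)"
  unfolding measurable_cong_sets[OF sets_pair_noise[OF assms] refl] case_prod_beta
  by (intro borel_measurable_Pair) measurable

lemma prob_space_induced:
  assumes "prob_space Q" "sets Q = sets borel"
  shows "prob_space (induced f0 M0 \<Lambda>0 Q)"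
proof -
  interpret Q: prob_space Q by fact
  interpret pair_prob_space \<Lambda>0 Q ..
  show ?thesis
    unfolding induced_def by (rule prob_space_distr[OF measurable_structural_map[OF assms(2)]])
qed

lemma emeasure_induced_resid_Z:
  assumes Q: "prob_space Q" "sets Q = sets borel"
    and f [measurable]: "f \<in> borel_measurable borel" and A: "A \<in> sets borel" and B: "B \<in> sets borel"
  shows "emeasure (induced f0 M0 \<Lambda>0 Q) (resid f -` A \<inter> simZ -` B)
    = (\<integral>\<^sup>+z. indicator B z * cond_resid_prob f0 M0 \<Lambda>0 f A z \<partial>Q)"
proof -
  interpret Q: prob_space Q by fact
  interpret pair_sigma_finite \<Lambda>0 Q ..
  have space_Q: "space Q = UNIV"
    using sets_eq_imp_space_eq[OF Q(2)] by simp
  let ?S = "structural_resid f0 M0 f -` A \<inter> UNIV \<times> B"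
  have "structural_resid f0 M0 f -` A \<in> sets (\<Lambda>0 \<Otimes>\<^sub>M Q)"
    using measurable_sets[OF borel_measurable_structural_resid[OF borel_measurable_f0 f] A]
    by (simp add: sets_pair_noise[OF Q(2)])
  moreover have "UNIV \<times> B \<in> sets (\<Lambda>0 \<Otimes>\<^sub>M Q)"
    using B Q(2) by (intro pair_measureI) auto
  ultimately have S: "?S \<in> sets (\<Lambda>0 \<Otimes>\<^sub>M Q)" by blast
  have "resid f -` A \<inter> simZ -` B \<in> sets (borel :: ('p,'r) outcome measure)"
    using A B by measurable
  then have "emeasure (induced f0 M0 \<Lambda>0 Q) (resid f -` A \<inter> simZ -` B) = emeasure (\<Lambda>0 \<Otimes>\<^sub>M Q) ?S"
    unfolding induced_def
    by (subst emeasure_distr[OF measurable_structural_map[OF Q(2)]])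
      (auto intro!: arg_cong[where f = "emeasure _"]
        simp: space_pair_measure space_Q structural_resid_def simX_def simY_def simZ_def)
  also have "\<dots> = (\<integral>\<^sup>+z. emeasure \<Lambda>0 ((\<lambda>w. (w, z)) -` ?S) \<partial>Q)"
    by (rule emeasure_pair_measure_alt2[OF S])
  also have "\<dots> = (\<integral>\<^sup>+z. indicator B z * cond_resid_prob f0 M0 \<Lambda>0 f A z \<partial>Q)"
    by (rule nn_integral_cong) (simp add: cond_resid_prob_def indicator_def vimage_def)
  finally show ?thesis .
qed

lemma emeasure_induced_Z:
  assumes Q: "prob_space Q" "sets Q = sets borel" and B: "B \<in> sets borel"
  shows "emeasure (induced f0 M0 \<Lambda>0 Q) (simZ -` B) = emeasure Q B"
proof -
  have "cond_resid_prob f0 M0 \<Lambda>0 (\<lambda>_. 0) UNIV z = 1" for z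
    using emeasure_space_1 by (simp add: cond_resid_prob_def)
  then show ?thesis
    using emeasure_induced_resid_Z[OF Q _ sets.top B, of "\<lambda>_. 0"] B Q(2)
    by simp
qed

lemma emeasure_resid_distr_induced:
  assumes Q: "prob_space Q" "sets Q = sets borel"
    and f: "f \<in> borel_measurable borel" and A: "A \<in> sets borel"
  shows "emeasure (resid_distr (induced f0 M0 \<Lambda>0 Q) f) A
    = (\<integral>\<^sup>+z. cond_resid_prob f0 M0 \<Lambda>0 f A z \<partial>Q)"
  unfolding emeasure_resid_distr[OF sets_induced[of f0 M0 \<Lambda>0 Q] f A]
  using emeasure_induced_resid_Z[OF Q f A sets.top] by simp

lemma emeasure_resid_distr_induced_return:
  assumes f: "f \<in> borel_measurable borel" and A: "A \<in> sets borel"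
  shows "emeasure (resid_distr (induced f0 M0 \<Lambda>0 (return borel z)) f) A
    = cond_resid_prob f0 M0 \<Lambda>0 f A z"
  using emeasure_resid_distr_induced[OF prob_space_return _ f A]
    borel_measurable_cond_resid_prob[OF f A]
  by (simp add: nn_integral_return)

lemma indep_resid_Z_if_AE_const:
  assumes Q: "prob_space Q" "sets Q = sets borel" and f [measurable]: "f \<in> borel_measurable borel"
    and const: "\<And>A. A \<in> sets borel \<Longrightarrow> AE z in Q. cond_resid_prob f0 M0 \<Lambda>0 f A z = c A"
  shows "indep_rv (induced f0 M0 \<Lambda>0 Q) (resid f) simZ"
proof -
  interpret Q: prob_space Q by fact
  interpret P: prob_space "induced f0 M0 \<Lambda>0 Q" by (rule prob_space_induced[OF Q])
  have joint: "emeasure (induced f0 M0 \<Lambda>0 Q) (resid f -` A \<inter> simZ -` B) = c A * emeasure Q B"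
    if A: "A \<in> sets borel" and B: "B \<in> sets borel" for A B
  proof -
    have "emeasure (induced f0 M0 \<Lambda>0 Q) (resid f -` A \<inter> simZ -` B)
        = (\<integral>\<^sup>+z. c A * indicator B z \<partial>Q)"
      unfolding emeasure_induced_resid_Z[OF Q f A B]
      by (rule nn_integral_cong_AE) (use const[OF A] in \<open>auto simp: mult.commute\<close>)
    also have "\<dots> = c A * emeasure Q B"
      using B Q(2) by (simp add: nn_integral_cmult_indicator)
    finally show ?thesis .
  qed
  show ?thesis
  proof (subst P.indep_rv_iff_prob_Int, measurable, intro ballI)
    fix A :: "real set" and B :: "(real^'r) set" assume A: "A \<in> sets borel" and B: "B \<in> sets borel"
    have "emeasure (induced f0 M0 \<Lambda>0 Q) (resid f -` A) = c A"
      using joint[OF A sets.top] Q.emeasure_space_1 sets_eq_imp_space_eq[OF Q(2)] by simp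
    then show "P.prob (resid f -` A \<inter> simZ -` B \<inter> space (induced f0 M0 \<Lambda>0 Q))
        = P.prob (resid f -` A \<inter> space (induced f0 M0 \<Lambda>0 Q))
          * P.prob (simZ -` B \<inter> space (induced f0 M0 \<Lambda>0 Q))"
      using joint[OF A B] emeasure_induced_Z[OF Q B] by (simp add: measure_def enn2real_mult)
  qed
qed

lemma AE_cond_resid_prob_if_indep:
  assumes Q: "prob_space Q" "sets Q = sets borel" and f [measurable]: "f \<in> borel_measurable borel"
    and indep: "indep_rv (induced f0 M0 \<Lambda>0 Q) (resid f) simZ" and A: "A \<in> sets borel"
  shows "AE z in Q. cond_resid_prob f0 M0 \<Lambda>0 f A z
    = emeasure (resid_distr (induced f0 M0 \<Lambda>0 Q) f) A"
proof -
  interpret Q: prob_space Q by fact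
  interpret P: prob_space "induced f0 M0 \<Lambda>0 Q" by (rule prob_space_induced[OF Q])
  let ?c = "emeasure (resid_distr (induced f0 M0 \<Lambda>0 Q) f) A"
  have rv: "resid f \<in> borel_measurable (induced f0 M0 \<Lambda>0 Q)"
    "simZ \<in> borel_measurable (induced f0 M0 \<Lambda>0 Q)"
    by measurable
  have product: "P.prob (resid f -` A \<inter> simZ -` B) = P.prob (resid f -` A) * P.prob (simZ -` B)"
    if "B \<in> sets borel" for B
    using indep[unfolded P.indep_rv_iff_prob_Int[OF rv]] that A by simp
  have "(\<integral>\<^sup>+z\<in>B. cond_resid_prob f0 M0 \<Lambda>0 f A z \<partial>Q) = (\<integral>\<^sup>+z\<in>B. ?c \<partial>Q)"
    if "B \<in> sets Q" for B
  proof -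
    have B: "B \<in> sets borel" using that Q(2) by simp
    have "(\<integral>\<^sup>+z\<in>B. cond_resid_prob f0 M0 \<Lambda>0 f A z \<partial>Q)
        = emeasure (induced f0 M0 \<Lambda>0 Q) (resid f -` A \<inter> simZ -` B)"
      by (simp add: emeasure_induced_resid_Z[OF Q f A B] mult.commute)
    also have "\<dots> = ?c * emeasure Q B"
      using product[OF B] emeasure_induced_Z[OF Q B]
        emeasure_resid_distr[OF sets_induced[of f0 M0 \<Lambda>0 Q] f A]
      by (simp add: P.emeasure_eq_measure ennreal_mult)
    also have "\<dots> = (\<integral>\<^sup>+z\<in>B. ?c \<partial>Q)"
      using that by (simp add: nn_integral_cmult_indicator)
    finally show ?thesis .
  qed
  then show ?thesis
    using borel_measurable_cond_resid_prob[OF f A]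
    by (intro Q.density_unique2) (auto simp: measurable_cong_sets[OF Q(2) refl])
qed

lemma absolutely_continuous_of_induced:
  assumes Q: "prob_space Q" "sets Q = sets borel" and Q': "prob_space Q'" "sets Q' = sets borel"
    and ac: "absolutely_continuous (induced f0 M0 \<Lambda>0 Q) (induced f0 M0 \<Lambda>0 Q')"
  shows "absolutely_continuous Q Q'"
  unfolding absolutely_continuous_def
proof
  fix N assume "N \<in> null_sets Q"
  then have N: "N \<in> sets borel" "emeasure Q N = 0"
    using Q(2) by auto
  have "simZ -` N \<in> sets (borel :: ('p,'r) outcome measure)"
    using measurable_sets[OF borel_measurable_simZ N(1)] by simp
  then have "simZ -` N \<in> null_sets (induced f0 M0 \<Lambda>0 Q)"
    using emeasure_induced_Z[OF Q N(1)] N(2) by auto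
  then have "emeasure (induced f0 M0 \<Lambda>0 Q') (simZ -` N) = 0"
    using ac unfolding absolutely_continuous_def by auto
  then show "N \<in> null_sets Q'"
    using emeasure_induced_Z[OF Q' N(1)] N(1) Q'(2) by auto
qed

end

lemma simdg_noise_if_setting:
  assumes "simdg_setting f0 M0 \<Lambda>0 Q0 Qtr F"
  shows "simdg_noise \<Lambda>0 f0"
proof -
  have "prob_space \<Lambda>0" "sets \<Lambda>0 = sets borel" "f0 \<in> borel_measurable borel"
    using assms unfolding simdg_setting_def by blast+
  then show ?thesis
    by (simp add: simdg_noise_def simdg_noise_axioms_def)
qed

lemma
  assumes "simdg_setting f0 M0 \<Lambda>0 Q0 Qtr F"
  shows simdg_setting_train_mem: "Qtr \<in> Q0"
    and simdg_setting_prob_space: "Q \<in> Q0 \<Longrightarrow> prob_space Q"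
    and simdg_setting_sets: "Q \<in> Q0 \<Longrightarrow> sets Q = sets borel"
    and simdg_setting_measurable: "f \<in> F \<Longrightarrow> f \<in> borel_measurable borel"
  using assms unfolding simdg_setting_def by blast+

lemma invariant_subset_H1:
  assumes setting: "simdg_setting f0 M0 \<Lambda>0 Q0 Qtr F" and dirac: "\<forall>z. return borel z \<in> Q0"
  shows "invariant_set f0 M0 \<Lambda>0 Q0 Qtr F \<subseteq> H1_set f0 M0 \<Lambda>0 Qtr F"
proof
  fix f assume invariant: "f \<in> invariant_set f0 M0 \<Lambda>0 Q0 Qtr F"
  interpret simdg_noise \<Lambda>0 f0 M0 using simdg_noise_if_setting[OF setting] .
  have f: "f \<in> F" "f \<in> borel_measurable borel"
    using invariant simdg_setting_measurable[OF setting] by (auto simp: invariant_set_def)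
  have Qtr: "prob_space Qtr" "sets Qtr = sets borel"
    using setting
    by (simp_all add: simdg_setting_train_mem simdg_setting_prob_space simdg_setting_sets)
  have "cond_resid_prob f0 M0 \<Lambda>0 f A z = emeasure (resid_distr (induced f0 M0 \<Lambda>0 Qtr) f) A"
    if A: "A \<in> sets borel" for A z
  proof -
    have "induced f0 M0 \<Lambda>0 (return borel z) \<in> induced_set f0 M0 \<Lambda>0 Q0"
      using dirac by (simp add: induced_set_def)
    then have "resid_distr (induced f0 M0 \<Lambda>0 Qtr) f
        = resid_distr (induced f0 M0 \<Lambda>0 (return borel z)) f"
      using invariant by (simp add: invariant_set_def)
    then show ?thesis
      using emeasure_resid_distr_induced_return[OF f(2) A, of z] by simp
  qed
  then have "indep_rv (induced f0 M0 \<Lambda>0 Qtr) (resid f) simZ"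
    by (intro indep_resid_Z_if_AE_const[OF Qtr f(2)]) auto
  then show "f \<in> H1_set f0 M0 \<Lambda>0 Qtr F"
    using f by (simp add: H1_set_def)
qed

lemma H1_subset_invariant_if_absolutely_continuous:
  assumes setting: "simdg_setting f0 M0 \<Lambda>0 Q0 Qtr F"
    and ac: "\<forall>P\<in>induced_set f0 M0 \<Lambda>0 Q0. absolutely_continuous (induced f0 M0 \<Lambda>0 Qtr) P"
  shows "H1_set f0 M0 \<Lambda>0 Qtr F \<subseteq> invariant_set f0 M0 \<Lambda>0 Q0 Qtr F"
proof
  fix f assume H1: "f \<in> H1_set f0 M0 \<Lambda>0 Qtr F"
  interpret simdg_noise \<Lambda>0 f0 M0 using simdg_noise_if_setting[OF setting] .
  have f: "f \<in> F" "f \<in> borel_measurable borel"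
    and indep: "indep_rv (induced f0 M0 \<Lambda>0 Qtr) (resid f) simZ"
    using H1 simdg_setting_measurable[OF setting] by (auto simp: H1_set_def)
  have Qtr: "prob_space Qtr" "sets Qtr = sets borel"
    using setting
    by (simp_all add: simdg_setting_train_mem simdg_setting_prob_space simdg_setting_sets)
  have "resid_distr (induced f0 M0 \<Lambda>0 Qtr) f = resid_distr (induced f0 M0 \<Lambda>0 Q) f"
    if "Q \<in> Q0" for Q
  proof (rule measure_eqI)
    have Q: "prob_space Q" "sets Q = sets borel"
      using setting \<open>Q \<in> Q0\<close> by (simp_all add: simdg_setting_prob_space simdg_setting_sets)
    interpret Q: prob_space Q by fact
    show "sets (resid_distr (induced f0 M0 \<Lambda>0 Qtr) f) = sets (resid_distr (induced f0 M0 \<Lambda>0 Q) f)"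
      by (simp add: resid_distr_def)
    fix A assume "A \<in> sets (resid_distr (induced f0 M0 \<Lambda>0 Qtr) f)"
    then have A: "A \<in> sets borel" by (simp add: resid_distr_def)
    let ?c = "emeasure (resid_distr (induced f0 M0 \<Lambda>0 Qtr) f) A"
    have "absolutely_continuous Qtr Q"
      using ac \<open>Q \<in> Q0\<close>
      by (intro absolutely_continuous_of_induced[OF Qtr Q]) (auto simp: induced_set_def)
    moreover have "AE z in Qtr. cond_resid_prob f0 M0 \<Lambda>0 f A z = ?c"
      by (rule AE_cond_resid_prob_if_indep[OF Qtr f(2) indep A])
    ultimately have "AE z in Q. cond_resid_prob f0 M0 \<Lambda>0 f A z = ?c"
      using Q(2) Qtr(2) by (intro absolutely_continuous_AE[of Q Qtr]) auto
    then have "(\<integral>\<^sup>+z. cond_resid_prob f0 M0 \<Lambda>0 f A z \<partial>Q) = (\<integral>\<^sup>+z. ?c \<partial>Q)"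
      by (rule nn_integral_cong_AE)
    then show "?c = emeasure (resid_distr (induced f0 M0 \<Lambda>0 Q) f) A"
      unfolding emeasure_resid_distr_induced[OF Q f(2) A]
      by (simp add: Q.emeasure_space_1)
  qed
  then show "f \<in> invariant_set f0 M0 \<Lambda>0 Q0 Qtr F"
    using f by (auto simp: invariant_set_def induced_set_def)
qed

section \<open>Failure of the converse without absolute continuity\<close>

definition signed_axis :: "'r::finite \<times> bool \<Rightarrow> real^'r" where
  "signed_axis a = axis (fst a) (if snd a then 1 else -1)"

definition signed_axes_distr :: "(real^'r::finite) measure" where
  "signed_axes_distr = distr (measure_pmf (pmf_of_set UNIV)) borel signed_axis"

definition ones_matrix :: "real^'r::finite^'p::finite" where
  "ones_matrix = (\<chi> i j. 1)"

lemma
  shows prob_space_signed_axes_distr: "prob_space (signed_axes_distr :: (real^'r::finite) measure)"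
    and sets_signed_axes_distr [simp]:
      "sets (signed_axes_distr :: (real^'r::finite) measure) = sets borel"
  unfolding signed_axes_distr_def by (auto intro!: measure_pmf.prob_space_distr)

lemma sum_UNIV_prod_bool: "(\<Sum>a\<in>UNIV. h a) = (\<Sum>i\<in>UNIV. h (i, True) + h (i, False))"
proof -
  have "(\<Sum>a\<in>UNIV. h a) = (\<Sum>i\<in>UNIV. \<Sum>b\<in>UNIV. h (i, b))"
    by (simp add: sum.cartesian_product UNIV_Times_UNIV[symmetric] del: UNIV_Times_UNIV)
  then show ?thesis
    by (simp add: UNIV_bool add.commute)
qed

lemma
  fixes g :: "real^'r::finite \<Rightarrow> 'b::{banach, second_countable_topology}"
  assumes g: "g \<in> borel_measurable borel"
  shows integrable_signed_axes_distr: "integrable signed_axes_distr g"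
    and integral_signed_axes_distr: "integral\<^sup>L signed_axes_distr g
      = (1 / (2 * real CARD('r))) *\<^sub>R (\<Sum>i\<in>UNIV. g (axis i 1) + g (axis i (-1)))"
proof -
  have sa: "signed_axis \<in> measurable (measure_pmf (pmf_of_set (UNIV :: ('r \<times> bool) set))) borel"
    by simp
  show "integrable signed_axes_distr g"
    unfolding signed_axes_distr_def
    by (subst integrable_distr_eq[OF sa g]) (rule integrable_measure_pmf_finite, simp)
  have "integral\<^sup>L signed_axes_distr g
      = (\<Sum>a\<in>UNIV. pmf (pmf_of_set (UNIV :: ('r \<times> bool) set)) a *\<^sub>R g (signed_axis a))"
    unfolding signed_axes_distr_def integral_distr[OF sa g] by (rule integral_measure_pmf) auto
  also have "\<dots> = (1 / (2 * real CARD('r))) *\<^sub>R (\<Sum>a\<in>UNIV. g (signed_axis a))"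
    by (simp add: scaleR_sum_right mult.commute)
  finally show "integral\<^sup>L signed_axes_distr g
      = (1 / (2 * real CARD('r))) *\<^sub>R (\<Sum>i\<in>UNIV. g (axis i 1) + g (axis i (-1)))"
    by (simp add: sum_UNIV_prod_bool signed_axis_def)
qed

lemma integral_signed_axes_distr_id: "integral\<^sup>L signed_axes_distr (\<lambda>z::real^'r::finite. z) = 0"
proof -
  have "axis i 1 + axis i (-1) = (0 :: real^'r)" for i
    by (simp add: vec_eq_iff axis_def)
  then show ?thesis
    by (simp add: integral_signed_axes_distr)
qed

lemma integral_signed_axes_distr_mult_components:
  "integral\<^sup>L signed_axes_distr (\<lambda>z::real^'r::finite. z $ i * z $ j)
    = (if i = j then 1 / real CARD('r) else 0)"
proof -
  have "axis k 1 $ i * axis k 1 $ j + axis k (-1) $ i * axis k (-1) $ j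
      = (if k = i then (if i = j then 2 else 0) else (0::real))" for k :: 'r
    by (simp add: axis_def)
  then show ?thesis
    by (simp add: integral_signed_axes_distr)
qed

lemma ones_matrix_mult_signed_axis_neq_0:
  "(ones_matrix :: real^'r::finite^'p::finite) *v signed_axis a \<noteq> 0"
proof -
  have "((ones_matrix :: real^'r^'p) *v signed_axis a) $ k = (if snd a then 1 else -1)" for k
    by (simp add: ones_matrix_def matrix_vector_mult_def signed_axis_def axis_def)
  then show ?thesis
    by (auto simp: vec_eq_iff split: if_splits)
qed

lemma AE_signed_axes_distr_ones_matrix:
  "AE z in signed_axes_distr. (ones_matrix :: real^'r::finite^'p::finite) *v z \<noteq> 0"
proof (rule AE_I')
  let ?N = "(\<lambda>z. (ones_matrix :: real^'r^'p) *v z) -` {0}"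
  have N: "?N \<in> sets borel"
    using measurable_sets[OF borel_measurable_matrix_vector_mult, of "{0}"] by simp
  have "signed_axis -` ?N = {}"
    using ones_matrix_mult_signed_axis_neq_0 by auto
  then show "?N \<in> null_sets signed_axes_distr"
    using N unfolding signed_axes_distr_def by (auto simp: emeasure_distr)
qed auto

lemma cond_resid_prob_return:
  fixes M0 :: "real^'r::finite^'p::finite"
  assumes f0: "f0 \<in> borel_measurable borel" and f: "f \<in> borel_measurable borel"
    and A: "A \<in> sets borel"
  shows "cond_resid_prob f0 M0 (return borel 0) f A z = indicator A (f0 (M0 *v z) - f (M0 *v z))"
proof -
  have slice: "(\<lambda>w::real \<times> (real^'p). (w, z)) \<in> borel_measurable borel"
    by (intro borel_measurable_continuous_onI continuous_intros)
  have "{w. structural_resid f0 M0 f (w, z) \<in> A} \<in> sets borel"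
    using measurable_sets[OF measurable_compose[OF slice borel_measurable_structural_resid[OF assms(1,2)]] A]
    by (simp add: vimage_def)
  then show ?thesis
    by (simp add: cond_resid_prob_def structural_resid_def indicator_def zero_prod_def)
qed

lemma integrable_return:
  fixes g :: "'a \<Rightarrow> 'b::{banach, second_countable_topology}"
  assumes "x \<in> space M" "g \<in> borel_measurable M"
  shows "integrable (return M x) g"
proof (rule integrableI_bounded)
  show "g \<in> borel_measurable (return M x)" using assms(2) by simp
  have "(\<integral>\<^sup>+ a. ennreal (norm (g a)) \<partial>return M x) = ennreal (norm (g x))"
    by (rule nn_integral_return[OF assms(1)]) (use assms(2) in measurable)
  then show "(\<integral>\<^sup>+ a. ennreal (norm (g a)) \<partial>return M x) < \<infinity>" by simp
qed

lemma simdg_noise_example: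
  "simdg_noise (return borel (0 :: real \<times> (real^'p::finite))) (\<lambda>_. 0)"
  by (simp add: simdg_noise_def simdg_noise_axioms_def prob_space_return)

lemma AE_cond_resid_prob_example:
  assumes "A \<in> sets borel"
  shows "AE z in signed_axes_distr. cond_resid_prob (\<lambda>_. 0) (ones_matrix :: real^'r::finite^'p::finite)
    (return borel 0) (indicator {0}) A z = indicator A (0::real)"
  using AE_signed_axes_distr_ones_matrix[where 'p='p]
  by eventually_elim (simp add: cond_resid_prob_return[OF _ _ assms])

lemma simdg_setting_example:
  "simdg_setting (\<lambda>_. 0) (ones_matrix :: real^'r::finite^'p::finite) (return borel 0)
     (insert signed_axes_distr (range (return borel))) signed_axes_distr {indicator {0}}"
  unfolding simdg_setting_def
proof (intro conjI)
  show "\<forall>a::real^'r. a \<noteq> 0 \<longrightarrow> a \<bullet> ((\<chi> i j. \<integral>z. z $ i * z $ j \<partial>signed_axes_distr) *v a) > 0"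
  proof (intro allI impI)
    fix a :: "real^'r" assume "a \<noteq> 0"
    have "(\<chi> i j. \<integral>z. z $ i * z $ j \<partial>signed_axes_distr) *v a = (1 / real CARD('r)) *\<^sub>R a"
      by (simp add: integral_signed_axes_distr_mult_components vec_eq_iff matrix_vector_mult_def
          if_distrib[of "\<lambda>c. c * _"] cong: if_cong)
    then show "a \<bullet> ((\<chi> i j. \<integral>z. z $ i * z $ j \<partial>signed_axes_distr) *v a) > 0"
      using \<open>a \<noteq> 0\<close> by simp
  qed
qed (auto intro: prob_space_return prob_space_signed_axes_distr integrable_return
    integrable_signed_axes_distr simp: integral_return integral_signed_axes_distr_id)

lemma indicator_zero_in_H1_example:
  "indicator {0} \<in> H1_set (\<lambda>_. 0) (ones_matrix :: real^'r::finite^'p::finite) (return borel 0)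
     signed_axes_distr {indicator {0}}"
proof -
  interpret simdg_noise "return borel 0" "\<lambda>_. 0" "ones_matrix :: real^'r^'p"
    by (rule simdg_noise_example)
  show ?thesis
    using indep_resid_Z_if_AE_const[OF prob_space_signed_axes_distr sets_signed_axes_distr _
        AE_cond_resid_prob_example]
    by (simp add: H1_set_def)
qed

lemma indicator_zero_not_invariant_example:
  "indicator {0} \<notin> invariant_set (\<lambda>_. 0) (ones_matrix :: real^'r::finite^'p::finite) (return borel 0)
     (insert signed_axes_distr (range (return borel))) signed_axes_distr {indicator {0}}"
proof
  let ?M = "ones_matrix :: real^'r^'p" and ?f = "indicator {0} :: real^'p \<Rightarrow> real"
  interpret simdg_noise "return borel 0" "\<lambda>_. 0" ?M
    by (rule simdg_noise_example)
  assume "?f \<in> invariant_set (\<lambda>_. 0) ?M (return borel 0)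
     (insert signed_axes_distr (range (return borel))) signed_axes_distr {indicator {0}}"
  then have "resid_distr (induced (\<lambda>_. 0) ?M (return borel 0) signed_axes_distr) ?f
      = resid_distr (induced (\<lambda>_. 0) ?M (return borel 0) (return borel 0)) ?f"
    unfolding invariant_set_def induced_set_def by blast
  moreover have
    "emeasure (resid_distr (induced (\<lambda>_. 0) ?M (return borel 0) (return borel 0)) ?f) {-1} = 1"
    by (simp add: emeasure_resid_distr_induced_return cond_resid_prob_return)
  moreover have
    "emeasure (resid_distr (induced (\<lambda>_. 0) ?M (return borel 0) signed_axes_distr) ?f) {-1} = 0"
  proof -
    have "(\<integral>\<^sup>+z. cond_resid_prob (\<lambda>_. 0) ?M (return borel 0) ?f {-1} z \<partial>signed_axes_distr)
        = (\<integral>\<^sup>+z. 0 \<partial>(signed_axes_distr :: (real^'r) measure))"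
      by (rule nn_integral_cong_AE) (use AE_cond_resid_prob_example[of "{-1}"] in simp)
    then show ?thesis
      by (simp add: emeasure_resid_distr_induced[OF prob_space_signed_axes_distr sets_signed_axes_distr])
  qed
  ultimately show False
    by simp
qed

theorem proposition1:
  fixes f0 :: "real^'p::finite \<Rightarrow> real" and M0 :: "real^'r::finite^'p"
    and \<Lambda>0 :: "(real \<times> (real^'p)) measure" and Q0 :: "(real^'r) measure set"
    and Qtr :: "(real^'r) measure" and F :: "(real^'p \<Rightarrow> real) set"
  assumes setting: "simdg_setting f0 M0 \<Lambda>0 Q0 Qtr F"
    and dirac: "\<forall>z. return borel z \<in> Q0"
  shows "(invariant_set f0 M0 \<Lambda>0 Q0 Qtr F \<subseteq> H1_set f0 M0 \<Lambda>0 Qtr F)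
    \<and> ((\<forall>P\<in>induced_set f0 M0 \<Lambda>0 Q0. absolutely_continuous (induced f0 M0 \<Lambda>0 Qtr) P)
         \<longrightarrow> H1_set f0 M0 \<Lambda>0 Qtr F \<subseteq> invariant_set f0 M0 \<Lambda>0 Q0 Qtr F)
    \<and> (\<exists>(f0' :: real^'p \<Rightarrow> real) (M0' :: real^'r^'p) (\<Lambda>0' :: (real \<times> (real^'p)) measure)
           (Q0' :: (real^'r) measure set) (Qtr' :: (real^'r) measure) (F' :: (real^'p \<Rightarrow> real) set).
           simdg_setting f0' M0' \<Lambda>0' Q0' Qtr' F' \<and>
           (\<forall>z. return borel z \<in> Q0') \<and>
           (\<forall>f\<in>F'. \<forall>g\<in>F'. \<forall>P\<in>induced_set f0' M0' \<Lambda>0' Q0'.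
              (AE \<omega> in induced f0' M0' \<Lambda>0' Qtr'. f (simX \<omega>) = g (simX \<omega>)) \<longrightarrow>
              (AE \<omega> in P. f (simX \<omega>) = g (simX \<omega>))) \<and>
           \<not> (H1_set f0' M0' \<Lambda>0' Qtr' F' \<subseteq> invariant_set f0' M0' \<Lambda>0' Q0' Qtr' F'))"
proof -
  have "\<forall>f\<in>{indicator {0}}. \<forall>g\<in>{indicator {0}}. \<forall>P. AE \<omega> in P. f (simX \<omega>) = (g (simX \<omega>) :: real)"
    by simp
  then show ?thesis
    using invariant_subset_H1[OF setting dirac] H1_subset_invariant_if_absolutely_continuous[OF setting]
      simdg_setting_example indicator_zero_in_H1_example indicator_zero_not_invariant_example
    by blast
qed

end
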